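(* Let $U\subseteq\mathbb{R}^d$ be open and convex, let $h:U\to\mathbb{R}$ be convex and twice continuously differentiable, let $f:U\to\mathbb{R}$ be continuously differentiable, let $\mu>0$, and let $\alpha,\beta,\gamma:\mathbb{R}\to\mathbb{R}$ be smooth functions. Define the (second Bregman) Lagrangian $$\mathcal{L}(x,v,t)=e^{\alpha_t+\gamma_t+\beta_t}\Big(\mu\, D_h\big(x+e^{-\alpha_t}v,\;x\big)-f(x)\Big),$$ for $(x,v,t)$ with $x,\,x+e^{-\alpha_t}v\in U$. Assume $\dot\gamma_t=e^{\alpha_t}$ for all $t$. Then a twice differentiable curve $t\mapsto X_t$ satisfies the Euler–Lagrange equation $$\frac{\partial\mathcal{L}}{\partial x}(X_t,\dot X_t,t)=\frac{d}{dt}\frac{\partial\mathcal{L}}{\partial v}(X_t,\dot X_t,t)$$ if and only if $$\frac{d}{dt}\nabla h\big(X_t+e^{-\alpha_t}\dot X_t\big)=\dot\beta_t\,\nabla h(X_t)-\dot\beta_t\,\nabla h\big(X_t+e^{-\alpha_t}\dot X_t\big)-\frac{e^{\alpha_t}}{\mu}\nabla f(X_t).$$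
   Context: The Bregman divergence of $h$ is $D_h(y,x)=h(y)-h(x)-\langle\nabla h(x),y-x\rangle$. Dots denote time derivatives. *)

theory Defs
  imports "HOL-Analysis.Analysis"
begin

definition grad :: "('a::euclidean_space \<Rightarrow> real) \<Rightarrow> 'a \<Rightarrow> 'a" where
  "grad f x = (SOME g. (f has_derivative (\<lambda>y. g \<bullet> y)) (at x))"

definition bregman :: "('a::euclidean_space \<Rightarrow> real) \<Rightarrow> 'a \<Rightarrow> 'a \<Rightarrow> real" where
  "bregman h y x = h y - h x - grad h x \<bullet> (y - x)"

definition C1_on :: "'a::euclidean_space set \<Rightarrow> ('a \<Rightarrow> real) \<Rightarrow> bool" where
  "C1_on U f \<longleftrightarrow> (\<exists>g. (\<forall>x\<in>U. (f has_derivative (\<lambda>y. g x \<bullet> y)) (at x)) \<and> continuous_on U g)"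

definition C2_on :: "'a::euclidean_space set \<Rightarrow> ('a \<Rightarrow> real) \<Rightarrow> bool" where
  "C2_on U f \<longleftrightarrow> (\<exists>g H. (\<forall>x\<in>U. (f has_derivative (\<lambda>y. g x \<bullet> y)) (at x))
      \<and> (\<forall>x\<in>U. (g has_derivative blinfun_apply (H x)) (at x)) \<and> continuous_on U H)"

definition smooth_real :: "(real \<Rightarrow> real) \<Rightarrow> bool" where
  "smooth_real f \<longleftrightarrow> (\<forall>n t. ((deriv ^^ n) f) differentiable (at t))"

definition bregman_lagrangian ::
  "('a::euclidean_space \<Rightarrow> real) \<Rightarrow> ('a \<Rightarrow> real) \<Rightarrow> real \<Rightarrow>
   (real \<Rightarrow> real) \<Rightarrow> (real \<Rightarrow> real) \<Rightarrow> (real \<Rightarrow> real) \<Rightarrow> 'a \<Rightarrow> 'a \<Rightarrow> real \<Rightarrow> real" where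
  "bregman_lagrangian h f \<mu> \<alpha> \<beta> \<gamma> x v t =
     exp (\<alpha> t + \<gamma> t + \<beta> t) * (\<mu> * bregman h (x + exp (- \<alpha> t) *\<^sub>R v) x - f x)"

end

theory Submission
  imports Defs
begin

text \<open>Writing
  Y = X + e^{-\<alpha>} X' and P = e^{\<gamma>+\<beta>}, the velocity gradient is \<mu> P (\<nabla>h(Y) - \<nabla>h(X)) and the
  position gradient is e^\<alpha> P (\<mu> (\<nabla>h(Y) - \<nabla>h(X) - e^{-\<alpha>} Hess h(X) X') - \<nabla>f(X)); the Hessian enters
  the latter transposed, so its symmetry (Schwarz's theorem, which is where continuity of Hess h is
  used) is needed. Differentiating the velocity gradient in time with \<gamma>' = e^\<alpha>, the Hessian terms
  cancel, and the difference of the two sides of the Euler-Lagrange equation turns out to be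
  \<mu> P times the difference of the two sides of the claimed equation. As \<mu> P \<noteq> 0, the two
  equations are equivalent at every time.\<close>

lemma grad_eqI:
  fixes F :: "'a::euclidean_space \<Rightarrow> real"
  assumes "(F has_derivative (\<lambda>y. c \<bullet> y)) (at x)"
  shows "grad F x = c"
proof -
  have "(F has_derivative (\<lambda>y. grad F x \<bullet> y)) (at x)"
    unfolding grad_def using assms by (rule someI)
  then have "(\<lambda>y. grad F x \<bullet> y) = (\<lambda>y. c \<bullet> y)"
    using assms by (rule has_derivative_unique)
  then have "(grad F x - c) \<bullet> (grad F x - c) = 0"
    by (metis inner_diff_left right_minus_eq)
  then show ?thesis by simp
qed

lemma C1_on_has_derivative_grad:
  assumes "C1_on U f" and "x \<in> U"
  shows "(f has_derivative (\<lambda>y. grad f x \<bullet> y)) (at x)"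
  using assms grad_eqI unfolding C1_on_def by metis

lemma smooth_real_differentiable:
  assumes "smooth_real F"
  shows "F differentiable (at t)"
  using assms unfolding smooth_real_def by (metis funpow_0)

lemma euler_lagrange_residual:
  fixes gY gX HX W G :: "'a::real_vector"
  assumes "a * e = 1" and "\<mu> \<noteq> 0"
  shows "(a * P) *\<^sub>R (\<mu> *\<^sub>R (gY - gX - e *\<^sub>R HX) - G) - ((\<mu> * P) *\<^sub>R (W - HX) + (\<mu> * P * (a + b)) *\<^sub>R (gY - gX))
    = (\<mu> * P) *\<^sub>R (b *\<^sub>R gX - b *\<^sub>R gY - (a / \<mu>) *\<^sub>R G - W)"
proof -
  have L: "(a * P) *\<^sub>R (\<mu> *\<^sub>R (gY - gX - e *\<^sub>R HX) - G) =
      (a * P * \<mu>) *\<^sub>R gY - (a * P * \<mu>) *\<^sub>R gX - (\<mu> * P) *\<^sub>R HX - (a * P) *\<^sub>R G"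
    using assms(1) by (simp add: algebra_simps)
  have R: "(\<mu> * P) *\<^sub>R (b *\<^sub>R gX - b *\<^sub>R gY - (a / \<mu>) *\<^sub>R G - W) =
      (\<mu> * P * b) *\<^sub>R gX - (\<mu> * P * b) *\<^sub>R gY - (a * P) *\<^sub>R G - (\<mu> * P) *\<^sub>R W"
    using assms(2) by (simp add: scaleR_diff_right)
  show ?thesis
    unfolding L R by (simp add: algebra_simps)
qed

locale C2_function =
  fixes U :: "'a::euclidean_space set" and h :: "'a \<Rightarrow> real" and H :: "'a \<Rightarrow> 'a \<Rightarrow>\<^sub>L 'a"
  assumes open_domain: "open U"
    and has_derivative_h: "x \<in> U \<Longrightarrow> (h has_derivative (\<lambda>y. grad h x \<bullet> y)) (at x)"
    and has_derivative_grad: "x \<in> U \<Longrightarrow> (grad h has_derivative blinfun_apply (H x)) (at x)"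
    and continuous_hessian: "continuous_on U H"

lemma C2_on_imp_C2_function:
  assumes "open U" and "C2_on U h"
  obtains H where "C2_function U h H"
proof -
  obtain g H where g: "\<And>x. x \<in> U \<Longrightarrow> (h has_derivative (\<lambda>y. g x \<bullet> y)) (at x)"
    and H: "\<And>x. x \<in> U \<Longrightarrow> (g has_derivative blinfun_apply (H x)) (at x)"
    and "continuous_on U H"
    using assms(2) unfolding C2_on_def by blast
  have grad: "grad h x = g x" if "x \<in> U" for x
    using grad_eqI[OF g[OF that]] .
  have "(grad h has_derivative blinfun_apply (H x)) (at x)" if "x \<in> U" for x
    using has_derivative_transform_within_open[OF H[OF that] assms(1) that] grad by simp
  with g grad \<open>open U\<close> \<open>continuous_on U H\<close> have "C2_function U h H"
    by unfold_locales simp_all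
  then show thesis by (rule that)
qed

context C2_function
begin

lemma has_derivative_h_along_line:
  assumes "x + s *\<^sub>R u + w \<in> U"
  shows "((\<lambda>s. h (x + s *\<^sub>R u + w)) has_derivative (\<lambda>d. d * (grad h (x + s *\<^sub>R u + w) \<bullet> u))) (at s within S)"
proof -
  have "((\<lambda>s. x + s *\<^sub>R u + w) has_derivative (\<lambda>d. d *\<^sub>R u)) (at s within S)"
    by (auto intro!: derivative_eq_intros)
  from has_derivative_compose[OF this has_derivative_h[OF assms]] show ?thesis by simp
qed

lemma second_difference_mean_value:
  assumes r: "r > 0" and sub: "cball x (r * (norm u + norm w)) \<subseteq> U"
  obtains p where "dist p x \<le> r * (norm u + norm w)"
    and "h (x + r *\<^sub>R u + r *\<^sub>R w) - h (x + r *\<^sub>R u) - h (x + r *\<^sub>R w) + h x = r\<^sup>2 * (H p w \<bullet> u)"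
proof -
  have norm_le: "norm (s *\<^sub>R u + \<tau> *\<^sub>R w) \<le> r * (norm u + norm w)"
    if "0 \<le> s" "s \<le> r" "0 \<le> \<tau>" "\<tau> \<le> r" for s \<tau>
  proof -
    have "norm (s *\<^sub>R u + \<tau> *\<^sub>R w) \<le> s * norm u + \<tau> * norm w"
      using that norm_triangle_le[of "s *\<^sub>R u" "\<tau> *\<^sub>R w"] by simp
    also have "\<dots> \<le> r * norm u + r * norm w"
      using that by (intro add_mono mult_right_mono) auto
    finally show ?thesis by (simp add: algebra_simps)
  qed
  have inU: "x + s *\<^sub>R u + \<tau> *\<^sub>R w \<in> U" if "0 \<le> s" "s \<le> r" "0 \<le> \<tau>" "\<tau> \<le> r" for s \<tau>
  proof -
    have "dist x (x + s *\<^sub>R u + \<tau> *\<^sub>R w) \<le> r * (norm u + norm w)"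
      using norm_le[OF that] by (simp add: dist_norm norm_minus_commute add.commute)
    then show ?thesis using sub by auto
  qed
  define \<psi> where "\<psi> s = h (x + s *\<^sub>R u + r *\<^sub>R w) - h (x + s *\<^sub>R u)" for s
  have d\<psi>: "(\<psi> has_derivative (\<lambda>d. d * (grad h (x + s *\<^sub>R u + r *\<^sub>R w) \<bullet> u) - d * (grad h (x + s *\<^sub>R u) \<bullet> u)))
      (at s within {0..r})" if "0 \<le> s" "s \<le> r" for s
    unfolding \<psi>_def using inU[OF that, of r] inU[OF that, of 0] r
    by (intro has_derivative_diff has_derivative_h_along_line[of _ _ _ 0, simplified]
        has_derivative_h_along_line) simp_all
  obtain \<xi> where \<xi>: "\<xi> \<in> {0<..<r}"
    and \<psi>: "\<psi> r - \<psi> 0 = (r - 0) * (grad h (x + \<xi> *\<^sub>R u + r *\<^sub>R w) \<bullet> u) - (r - 0) * (grad h (x + \<xi> *\<^sub>R u) \<bullet> u)"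
    using mvt_simple[OF r d\<psi>] by blast
  define \<phi> where "\<phi> \<tau> = grad h (x + \<xi> *\<^sub>R u + \<tau> *\<^sub>R w) \<bullet> u" for \<tau>
  have d\<phi>: "(\<phi> has_derivative (\<lambda>d. H (x + \<xi> *\<^sub>R u + \<tau> *\<^sub>R w) (d *\<^sub>R w) \<bullet> u)) (at \<tau> within {0..r})"
    if "0 \<le> \<tau>" "\<tau> \<le> r" for \<tau>
  proof -
    have "((\<lambda>\<tau>. x + \<xi> *\<^sub>R u + \<tau> *\<^sub>R w) has_derivative (\<lambda>d. d *\<^sub>R w)) (at \<tau> within {0..r})"
      by (auto intro!: derivative_eq_intros)
    from has_derivative_compose[OF this has_derivative_grad] have
      "((\<lambda>\<tau>. grad h (x + \<xi> *\<^sub>R u + \<tau> *\<^sub>R w)) has_derivative (\<lambda>d. H (x + \<xi> *\<^sub>R u + \<tau> *\<^sub>R w) (d *\<^sub>R w)))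
        (at \<tau> within {0..r})"
      using inU \<xi> that by auto
    then show ?thesis unfolding \<phi>_def by (rule has_derivative_inner_left)
  qed
  obtain \<eta> where \<eta>: "\<eta> \<in> {0<..<r}" and \<phi>: "\<phi> r - \<phi> 0 = H (x + \<xi> *\<^sub>R u + \<eta> *\<^sub>R w) ((r - 0) *\<^sub>R w) \<bullet> u"
    using mvt_simple[OF r d\<phi>] by blast
  define p where "p = x + \<xi> *\<^sub>R u + \<eta> *\<^sub>R w"
  have "\<psi> r - \<psi> 0 = r * (\<phi> r - \<phi> 0)"
    using \<psi> unfolding \<phi>_def by (simp add: algebra_simps)
  also have "\<dots> = r\<^sup>2 * (H p w \<bullet> u)"
    using \<phi> unfolding p_def by (simp add: blinfun.scaleR_right power2_eq_square)
  finally have "\<psi> r - \<psi> 0 = r\<^sup>2 * (H p w \<bullet> u)" .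
  moreover have "dist p x \<le> r * (norm u + norm w)"
    using norm_le[of \<xi> \<eta>] \<xi> \<eta> unfolding p_def by (simp add: dist_norm algebra_simps)
  ultimately show thesis
    using that unfolding \<psi>_def by (simp add: algebra_simps)
qed

text \<open>Schwarz's theorem: the two orders of the second difference quotient have the same limit.\<close>
lemma hessian_symmetric:
  assumes "x \<in> U"
  shows "H x w \<bullet> u = H x u \<bullet> w"
proof (rule ccontr)
  assume "H x w \<bullet> u \<noteq> H x u \<bullet> w"
  define d where "d = \<bar>H x w \<bullet> u - H x u \<bullet> w\<bar>"
  have "d > 0"
    using \<open>H x w \<bullet> u \<noteq> H x u \<bullet> w\<close> unfolding d_def by simp
  have "isCont (\<lambda>p. H p w \<bullet> u) x" "isCont (\<lambda>p. H p u \<bullet> w) x"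
    using continuous_on_blinfun_matrix[OF continuous_hessian] open_domain assms
      continuous_on_eq_continuous_at by blast+
  then obtain \<delta>1 \<delta>2 where \<delta>1: "\<delta>1 > 0" "\<And>p. dist p x < \<delta>1 \<Longrightarrow> dist (H p w \<bullet> u) (H x w \<bullet> u) < d / 2"
    and \<delta>2: "\<delta>2 > 0" "\<And>p. dist p x < \<delta>2 \<Longrightarrow> dist (H p u \<bullet> w) (H x u \<bullet> w) < d / 2"
    using \<open>d > 0\<close> half_gt_zero unfolding continuous_at_eps_delta by metis
  obtain \<epsilon> where "\<epsilon> > 0" "ball x \<epsilon> \<subseteq> U"
    using open_domain assms openE by blast
  define R where "R = min (min \<delta>1 \<delta>2) \<epsilon>"
  have "R > 0"
    unfolding R_def using \<delta>1 \<delta>2 \<open>\<epsilon> > 0\<close> by simp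
  define r where "r = R / (norm u + norm w + 1)"
  have r: "r > 0"
    using \<open>R > 0\<close> unfolding r_def by (simp add: add_nonneg_pos)
  have "r * (norm u + norm w) < r * (norm u + norm w + 1)"
    using r by simp
  also have "\<dots> = R"
    using add_nonneg_pos[of "norm u + norm w" 1] unfolding r_def by simp
  finally have rR: "r * (norm u + norm w) < R" .
  then have "cball x (r * (norm u + norm w)) \<subseteq> U" "cball x (r * (norm w + norm u)) \<subseteq> U"
    using \<open>ball x \<epsilon> \<subseteq> U\<close> unfolding R_def by (auto simp: add.commute subset_eq)
  then obtain p q where p: "dist p x \<le> r * (norm u + norm w)"
      "h (x + r *\<^sub>R u + r *\<^sub>R w) - h (x + r *\<^sub>R u) - h (x + r *\<^sub>R w) + h x = r\<^sup>2 * (H p w \<bullet> u)"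
    and q: "dist q x \<le> r * (norm w + norm u)"
      "h (x + r *\<^sub>R w + r *\<^sub>R u) - h (x + r *\<^sub>R w) - h (x + r *\<^sub>R u) + h x = r\<^sup>2 * (H q u \<bullet> w)"
    using second_difference_mean_value[OF r] by metis
  have "r\<^sup>2 * (H p w \<bullet> u) = r\<^sup>2 * (H q u \<bullet> w)"
    using p(2) q(2) by (simp add: algebra_simps)
  then have "H p w \<bullet> u = H q u \<bullet> w"
    using r by simp
  moreover have "\<bar>H p w \<bullet> u - H x w \<bullet> u\<bar> < d / 2" "\<bar>H q u \<bullet> w - H x u \<bullet> w\<bar> < d / 2"
    using p(1) q(1) rR \<delta>1(2) \<delta>2(2)
    unfolding R_def by (simp_all add: dist_real_def add.commute)
  ultimately show False
    unfolding d_def by (simp add: abs_if split: if_splits)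
qed

lemma has_derivative_bregman_wrt_base:
  assumes "x \<in> U" "x + w \<in> U"
  shows "((\<lambda>z. bregman h (z + w) z) has_derivative (\<lambda>y. (grad h (x + w) - grad h x - H x w) \<bullet> y)) (at x)"
proof -
  have "((\<lambda>z. z + w) has_derivative (\<lambda>y. y)) (at x)"
    by (auto intro!: derivative_eq_intros)
  from has_derivative_compose[OF this has_derivative_h[OF assms(2)]]
  have "((\<lambda>z. h (z + w) - h z - grad h z \<bullet> w) has_derivative
      (\<lambda>y. grad h (x + w) \<bullet> y - grad h x \<bullet> y - H x y \<bullet> w)) (at x)"
    using assms by (intro has_derivative_diff has_derivative_h has_derivative_inner_left has_derivative_grad)
  then show ?thesis
    unfolding bregman_def using hessian_symmetric[OF assms(1)] by (simp add: inner_diff_left)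
qed

lemma has_derivative_bregman_wrt_target:
  assumes "x + e *\<^sub>R v \<in> U"
  shows "((\<lambda>u. bregman h (x + e *\<^sub>R u) x) has_derivative (\<lambda>y. (e *\<^sub>R (grad h (x + e *\<^sub>R v) - grad h x)) \<bullet> y))
    (at v)"
proof -
  have "((\<lambda>u. x + e *\<^sub>R u) has_derivative (\<lambda>y. e *\<^sub>R y)) (at v)"
    by (auto intro!: derivative_eq_intros)
  from has_derivative_compose[OF this has_derivative_h[OF assms]]
  have "((\<lambda>u. h (x + e *\<^sub>R u) - h x - grad h x \<bullet> (x + e *\<^sub>R u - x)) has_derivative
      (\<lambda>y. grad h (x + e *\<^sub>R v) \<bullet> (e *\<^sub>R y) - 0 - grad h x \<bullet> (e *\<^sub>R y))) (at v)"
    by (auto intro!: derivative_eq_intros)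
  then show ?thesis
    unfolding bregman_def by (simp add: inner_diff_left right_diff_distrib)
qed

lemma grad_bregman_lagrangian_position:
  assumes "x \<in> U" "x + exp (- \<alpha> t) *\<^sub>R v \<in> U"
    and f: "(f has_derivative (\<lambda>y. grad f x \<bullet> y)) (at x)"
  shows "grad (\<lambda>x. bregman_lagrangian h f \<mu> \<alpha> \<beta> \<gamma> x v t) x =
    exp (\<alpha> t + \<gamma> t + \<beta> t) *\<^sub>R
      (\<mu> *\<^sub>R (grad h (x + exp (- \<alpha> t) *\<^sub>R v) - grad h x - exp (- \<alpha> t) *\<^sub>R H x v) - grad f x)"
proof -
  note D = has_derivative_bregman_wrt_base[OF assms(1,2)]
  have "((\<lambda>x. exp (\<alpha> t + \<gamma> t + \<beta> t) * (\<mu> * bregman h (x + exp (- \<alpha> t) *\<^sub>R v) x - f x)) has_derivative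
      (\<lambda>y. exp (\<alpha> t + \<gamma> t + \<beta> t) * (\<mu> * ((grad h (x + exp (- \<alpha> t) *\<^sub>R v) - grad h x
        - H x (exp (- \<alpha> t) *\<^sub>R v)) \<bullet> y) - grad f x \<bullet> y))) (at x)"
    by (intro has_derivative_mult_right has_derivative_diff D f)
  then show ?thesis
    unfolding bregman_lagrangian_def
    by (intro grad_eqI) (simp add: blinfun.scaleR_right algebra_simps)
qed

lemma grad_bregman_lagrangian_velocity:
  assumes "x + exp (- \<alpha> t) *\<^sub>R v \<in> U"
  shows "grad (\<lambda>v. bregman_lagrangian h f \<mu> \<alpha> \<beta> \<gamma> x v t) v =
    (\<mu> * exp (\<gamma> t + \<beta> t)) *\<^sub>R (grad h (x + exp (- \<alpha> t) *\<^sub>R v) - grad h x)"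
proof -
  define w where "w = grad h (x + exp (- \<alpha> t) *\<^sub>R v) - grad h x"
  have exp_cancel: "exp (\<alpha> t + \<gamma> t + \<beta> t) * exp (- \<alpha> t) = exp (\<gamma> t + \<beta> t)"
    by (simp add: mult_exp_exp)
  have rhs: "(\<lambda>y. exp (\<alpha> t + \<gamma> t + \<beta> t) * (\<mu> * ((exp (- \<alpha> t) *\<^sub>R w) \<bullet> y) - 0)) =
      (\<lambda>y. ((\<mu> * exp (\<gamma> t + \<beta> t)) *\<^sub>R w) \<bullet> y)"
    by (simp add: fun_eq_iff mult_ac flip: exp_cancel)
  have "((\<lambda>v. exp (\<alpha> t + \<gamma> t + \<beta> t) * (\<mu> * bregman h (x + exp (- \<alpha> t) *\<^sub>R v) x - f x))
      has_derivative (\<lambda>y. ((\<mu> * exp (\<gamma> t + \<beta> t)) *\<^sub>R w) \<bullet> y)) (at v)"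
    unfolding w_def
    by (intro has_derivative_eq_rhs[OF has_derivative_mult_right[OF has_derivative_diff[OF
          has_derivative_mult_right[OF has_derivative_bregman_wrt_target[OF assms]] has_derivative_const]]
          rhs[unfolded w_def]])
  then show ?thesis
    unfolding bregman_lagrangian_def w_def by (rule grad_eqI)
qed

lemma has_vector_derivative_grad_comp:
  assumes "Z t \<in> U" and "(Z has_vector_derivative Z') (at t)"
  shows "((\<lambda>s. grad h (Z s)) has_vector_derivative H (Z t) Z') (at t)"
  using vector_derivative_diff_chain_within[OF assms(2)
      has_derivative_at_withinI[OF has_derivative_grad[OF assms(1)]]]
  by (simp add: o_def)

lemma euler_lagrange_iff_bregman_flow:
  assumes f: "\<And>x. x \<in> U \<Longrightarrow> (f has_derivative (\<lambda>y. grad f x \<bullet> y)) (at x)" and "\<mu> \<noteq> 0"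
    and \<alpha>: "\<alpha> differentiable (at t)" and \<beta>: "\<beta> differentiable (at t)"
    and \<gamma>: "(\<gamma> has_real_derivative exp (\<alpha> t)) (at t)"
    and X: "(X has_vector_derivative X' t) (at t)" and X': "X' differentiable (at t)"
    and XU: "\<And>s. X s \<in> U" and YU: "\<And>s. X s + exp (- \<alpha> s) *\<^sub>R X' s \<in> U"
  shows "grad (\<lambda>x. bregman_lagrangian h f \<mu> \<alpha> \<beta> \<gamma> x (X' t) t) (X t) =
      vector_derivative (\<lambda>s. grad (\<lambda>v. bregman_lagrangian h f \<mu> \<alpha> \<beta> \<gamma> (X s) v s) (X' s)) (at t)
    \<longleftrightarrow> vector_derivative (\<lambda>s. grad h (X s + exp (- \<alpha> s) *\<^sub>R X' s)) (at t) =
      deriv \<beta> t *\<^sub>R grad h (X t) - deriv \<beta> t *\<^sub>R grad h (X t + exp (- \<alpha> t) *\<^sub>R X' t)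
      - (exp (\<alpha> t) / \<mu>) *\<^sub>R grad f (X t)"
proof -
  define Y where "Y s = X s + exp (- \<alpha> s) *\<^sub>R X' s" for s
  define P where "P = exp (\<gamma> t + \<beta> t)"
  define W where "W = vector_derivative (\<lambda>s. grad h (Y s)) (at t)"
  have pos: "grad (\<lambda>x. bregman_lagrangian h f \<mu> \<alpha> \<beta> \<gamma> x (X' t) t) (X t) =
      (exp (\<alpha> t) * P) *\<^sub>R (\<mu> *\<^sub>R (grad h (Y t) - grad h (X t) - exp (- \<alpha> t) *\<^sub>R H (X t) (X' t)) - grad f (X t))"
    using grad_bregman_lagrangian_position[where \<alpha>=\<alpha> and t=t, OF XU YU f[OF XU]]
    unfolding Y_def P_def by (simp add: mult_exp_exp add.assoc)
  have vel: "(\<lambda>s. grad (\<lambda>v. bregman_lagrangian h f \<mu> \<alpha> \<beta> \<gamma> (X s) v s) (X' s)) =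
      (\<lambda>s. (\<mu> * exp (\<gamma> s + \<beta> s)) *\<^sub>R (grad h (Y s) - grad h (X s)))"
    using grad_bregman_lagrangian_velocity[where \<alpha>=\<alpha>, OF YU] unfolding Y_def by simp
  have "(\<alpha> has_real_derivative deriv \<alpha> t) (at t)"
    using \<alpha> DERIV_deriv_iff_real_differentiable by blast
  then have "((\<lambda>s. exp (- \<alpha> s)) has_real_derivative exp (- \<alpha> t) * - deriv \<alpha> t) (at t)"
    by (auto intro!: derivative_eq_intros)
  then have "(\<lambda>s. exp (- \<alpha> s)) differentiable (at t)"
    unfolding differentiable_def has_field_derivative_def by blast
  then have "Y differentiable (at t)"
    unfolding Y_def[abs_def] using differentiableI_vector[OF X] X' by simp
  moreover have "grad h differentiable (at (Y t))"
    using has_derivative_grad[of "Y t"] YU unfolding Y_def differentiable_def by blast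
  ultimately have "(\<lambda>s. grad h (Y s)) differentiable (at t)"
    using differentiable_chain_at by (simp add: o_def)
  then have dY: "((\<lambda>s. grad h (Y s)) has_vector_derivative W) (at t)"
    unfolding W_def by (simp add: vector_derivative_works)
  have "(\<beta> has_real_derivative deriv \<beta> t) (at t)"
    using \<beta> DERIV_deriv_iff_real_differentiable by blast
  then have dP: "((\<lambda>s. \<mu> * exp (\<gamma> s + \<beta> s)) has_real_derivative \<mu> * P * (exp (\<alpha> t) + deriv \<beta> t)) (at t)"
    using \<gamma> unfolding P_def by (auto intro!: derivative_eq_intros simp: algebra_simps)
  have vel': "vector_derivative (\<lambda>s. grad (\<lambda>v. bregman_lagrangian h f \<mu> \<alpha> \<beta> \<gamma> (X s) v s) (X' s)) (at t) =
      (\<mu> * P) *\<^sub>R (W - H (X t) (X' t)) + (\<mu> * P * (exp (\<alpha> t) + deriv \<beta> t)) *\<^sub>R (grad h (Y t) - grad h (X t))"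
    unfolding vel P_def
    by (rule vector_derivative_at[OF has_vector_derivative_scaleR[OF dP[unfolded P_def]
          has_vector_derivative_diff[OF dY has_vector_derivative_grad_comp[OF XU X]]]])
  have residual: "grad (\<lambda>x. bregman_lagrangian h f \<mu> \<alpha> \<beta> \<gamma> x (X' t) t) (X t) -
      vector_derivative (\<lambda>s. grad (\<lambda>v. bregman_lagrangian h f \<mu> \<alpha> \<beta> \<gamma> (X s) v s) (X' s)) (at t) =
      (\<mu> * P) *\<^sub>R (deriv \<beta> t *\<^sub>R grad h (X t) - deriv \<beta> t *\<^sub>R grad h (Y t) - (exp (\<alpha> t) / \<mu>) *\<^sub>R grad f (X t) - W)"
    (is "?A - ?B = _ *\<^sub>R (?R - W)")
    unfolding pos vel' using \<open>\<mu> \<noteq> 0\<close> by (intro euler_lagrange_residual) (simp_all add: exp_minus_inverse)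
  have "\<mu> * P \<noteq> 0"
    using \<open>\<mu> \<noteq> 0\<close> unfolding P_def by simp
  have "?A = ?B \<longleftrightarrow> ?A - ?B = 0"
    by (rule eq_iff_diff_eq_0)
  also have "\<dots> \<longleftrightarrow> ?R - W = 0"
    unfolding residual using \<open>\<mu> * P \<noteq> 0\<close> by simp
  also have "\<dots> \<longleftrightarrow> W = ?R"
    by auto
  finally show ?thesis
    unfolding W_def Y_def .
qed

end

theorem proposition1:
  fixes U :: "'a::euclidean_space set"
    and h f :: "'a \<Rightarrow> real"
    and \<mu> :: real
    and \<alpha> \<beta> \<gamma> :: "real \<Rightarrow> real"
    and X X' :: "real \<Rightarrow> 'a"
  assumes "open U" and "convex U"
    and "convex_on U h" and "C2_on U h"
    and "C1_on U f"
    and "\<mu> > 0"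
    and "smooth_real \<alpha>" and "smooth_real \<beta>" and "smooth_real \<gamma>"
    and "\<forall>t. deriv \<gamma> t = exp (\<alpha> t)"
    and "\<forall>t. (X has_vector_derivative X' t) (at t)"
    and "\<forall>t. X' differentiable (at t)"
    and "\<forall>t. X t \<in> U \<and> X t + exp (- \<alpha> t) *\<^sub>R X' t \<in> U"
  shows "(\<forall>t. grad (\<lambda>x. bregman_lagrangian h f \<mu> \<alpha> \<beta> \<gamma> x (X' t) t) (X t)
              = vector_derivative (\<lambda>s. grad (\<lambda>v. bregman_lagrangian h f \<mu> \<alpha> \<beta> \<gamma> (X s) v s) (X' s)) (at t))
     \<longleftrightarrow>
         (\<forall>t. vector_derivative (\<lambda>s. grad h (X s + exp (- \<alpha> s) *\<^sub>R X' s)) (at t)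
              = deriv \<beta> t *\<^sub>R grad h (X t)
                - deriv \<beta> t *\<^sub>R grad h (X t + exp (- \<alpha> t) *\<^sub>R X' t)
                - (exp (\<alpha> t) / \<mu>) *\<^sub>R grad f (X t))"
proof -
  obtain H where "C2_function U h H"
    using C2_on_imp_C2_function[OF assms(1,4)] .
  then interpret C2_function U h H .
  have "(\<gamma> has_real_derivative exp (\<alpha> t)) (at t)" for t
    using smooth_real_differentiable[OF assms(9)] assms(10) DERIV_deriv_iff_real_differentiable
    by metis
  from euler_lagrange_iff_bregman_flow[OF C1_on_has_derivative_grad[OF assms(5)] _
      smooth_real_differentiable[OF assms(7)] smooth_real_differentiable[OF assms(8)] this]
  show ?thesis
    using assms(6,11-13) by simp
qed

end
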